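(* Let $(b,c)$ be a weighted graph over $X$ and let $m$ be a measure on $X$ with $m(X)<\infty$. Let $\sigma$ be a pseudometric on $X$ which is intrinsic with respect to $m$. (a) If $c\equiv0$, then $\sigma\le\sqrt{m(X)}\,\varrho$ on $X\times X$. (b) If $C:=\sum_{x\in X}c(x)<\infty$ and $\sigma\le S$ on $X\times X$ for some constant $S\ge0$, then $\sigma\le\sqrt{m(X)+CS^2}\,\varrho$ on $X\times X$.
   Context: Let $X$ be a countably infinite set. A weighted graph $(b,c)$ over $X$ consists of a symmetric $b:X\times X\to[0,\infty)$ with $b(x,x)=0$ and $\sum_{y}b(x,y)<\infty$ for all $x$, and $c:X\to[0,\infty)$. For $f:X\to\mathbb C$ let $\widetilde Q(f)=\frac12\sum_{x,y}b(x,y)|f(x)-f(y)|^2+\sum_x c(x)|f(x)|^2\in[0,\infty]$ and $\widetilde D=\{f:\widetilde Q(f)<\infty\}$. Define $\varrho(x,y)=\sup\{|f(x)-f(y)|:f\in\widetilde D,\ \widetilde Q(f)\le1\}\in[0,\infty]$. A measure on $X$ is a function $m:X\to[0,\infty)$, with $m(A)=\sum_{x\in A}m(x)$. A pseudometric $\sigma:X\times X\to[0,\infty)$ is called intrinsic with respect to $m$ if $\frac12\sum_{y\in X}b(x,y)\sigma(x,y)^2\le m(x)$ for every $x\in X$. *)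

theory Defs
  imports "HOL-Analysis.Analysis"
begin

definition weighted_graph :: "('x \<Rightarrow> 'x \<Rightarrow> real) \<Rightarrow> ('x \<Rightarrow> real) \<Rightarrow> bool" where
  "weighted_graph b c \<longleftrightarrow>
     (\<forall>x y. b x y \<ge> 0) \<and> (\<forall>x y. b x y = b y x) \<and> (\<forall>x. b x x = 0) \<and>
     (\<forall>x. (\<lambda>y. b x y) summable_on UNIV) \<and> (\<forall>x. c x \<ge> 0)"

definition Qt :: "('x \<Rightarrow> 'x \<Rightarrow> real) \<Rightarrow> ('x \<Rightarrow> real) \<Rightarrow> ('x \<Rightarrow> complex) \<Rightarrow> ennreal" where
  "Qt b c f =
     ennreal (1/2) * (\<Sum>\<^sub>\<infinity>(x,y)\<in>UNIV. ennreal (b x y * (cmod (f x - f y))\<^sup>2))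
     + (\<Sum>\<^sub>\<infinity>x\<in>UNIV. ennreal (c x * (cmod (f x))\<^sup>2))"

definition Dt :: "('x \<Rightarrow> 'x \<Rightarrow> real) \<Rightarrow> ('x \<Rightarrow> real) \<Rightarrow> ('x \<Rightarrow> complex) set" where
  "Dt b c = {f. Qt b c f < \<infinity>}"

definition rho :: "('x \<Rightarrow> 'x \<Rightarrow> real) \<Rightarrow> ('x \<Rightarrow> real) \<Rightarrow> 'x \<Rightarrow> 'x \<Rightarrow> ennreal" where
  "rho b c x y = (SUP f\<in>{f. f \<in> Dt b c \<and> Qt b c f \<le> 1}. ennreal (cmod (f x - f y)))"

definition pseudometric :: "('x \<Rightarrow> 'x \<Rightarrow> real) \<Rightarrow> bool" where
  "pseudometric \<sigma> \<longleftrightarrow>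
     (\<forall>x y. \<sigma> x y \<ge> 0) \<and> (\<forall>x. \<sigma> x x = 0) \<and> (\<forall>x y. \<sigma> x y = \<sigma> y x) \<and>
     (\<forall>x y z. \<sigma> x z \<le> \<sigma> x y + \<sigma> y z)"

text \<open>Measure: a nonnegative function m; m(A) = sum over A.\<close>
definition measure_on :: "('x \<Rightarrow> real) \<Rightarrow> bool" where
  "measure_on m \<longleftrightarrow> (\<forall>x. m x \<ge> 0)"

definition intrinsic :: "('x \<Rightarrow> 'x \<Rightarrow> real) \<Rightarrow> ('x \<Rightarrow> real) \<Rightarrow> ('x \<Rightarrow> 'x \<Rightarrow> real) \<Rightarrow> bool" where
  "intrinsic b m \<sigma> \<longleftrightarrow>
     (\<forall>x. ennreal (1/2) * (\<Sum>\<^sub>\<infinity>y\<in>UNIV. ennreal (b x y * (\<sigma> x y)\<^sup>2)) \<le> ennreal (m x))"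

end

theory Submission imports Defs begin

(* Idea: for a base point x and a scale t >= 0 the test function f_t = t * sigma(x, .) is
   t-Lipschitz with respect to sigma.  Because sigma is intrinsic, the edge part of its energy
   is at most t^2 m(X); its killing part is t^2 sum_u c(u) sigma(x,u)^2, which vanishes if c = 0
   and is at most t^2 C S^2 if sigma <= S.  Hence Qt(f_t) <= t^2 K with K = m(X) + C S^2, so
   f_t is admissible in the supremum defining rho once t^2 K <= 1, which gives
   t * sigma(x,y) <= rho(x,y); choosing t = 1/sqrt K yields sigma <= sqrt K * rho. *)

lemma enn_sum_le_infsum:
  fixes h :: "'a \<Rightarrow> ennreal"
  assumes "finite F" "F \<subseteq> A"
  shows "sum h F \<le> infsum h A"
  unfolding nonneg_infsum_complete[of A h, OF zero_le]
  by (rule SUP_upper) (use assms in auto)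

lemma enn_infsum_le:
  fixes h :: "'a \<Rightarrow> ennreal"
  assumes "\<And>F. finite F \<Longrightarrow> F \<subseteq> A \<Longrightarrow> sum h F \<le> B"
  shows "infsum h A \<le> B"
  unfolding nonneg_infsum_complete[of A h, OF zero_le]
  by (rule SUP_least) (use assms in auto)

lemma enn_infsum_cmult:
  fixes h :: "'a \<Rightarrow> ennreal"
  shows "(\<Sum>\<^sub>\<infinity>x\<in>A. c * h x) = c * infsum h A"
  unfolding nonneg_infsum_complete[of A h, OF zero_le]
    nonneg_infsum_complete[of A "\<lambda>x. c * h x", OF zero_le]
  by (simp add: SUP_mult_left_ennreal sum_distrib_left)

lemma enn_infsum_mono:
  fixes h g :: "'a \<Rightarrow> ennreal"
  assumes "\<And>x. x \<in> A \<Longrightarrow> h x \<le> g x"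
  shows "infsum h A \<le> infsum g A"
  by (rule infsum_mono) (use assms in \<open>auto intro: nonneg_summable_on_complete\<close>)

lemma enn_infsum_real:
  fixes m :: "'a \<Rightarrow> real"
  assumes "m summable_on A" "\<And>x. x \<in> A \<Longrightarrow> m x \<ge> 0"
  shows "(\<Sum>\<^sub>\<infinity>x\<in>A. ennreal (m x)) = ennreal (infsum m A)"
proof -
  have "ennreal (infsum m A) = (SUP F\<in>{F. finite F \<and> F \<subseteq> A}. ennreal (sum m F))"
    by (rule infsum_nonneg_is_SUPREMUM_ennreal) (use assms in auto)
  also have "\<dots> = (SUP F\<in>{F. finite F \<and> F \<subseteq> A}. (\<Sum>x\<in>F. ennreal (m x)))"
    by (intro SUP_cong refl) (use assms in \<open>auto intro!: sum_ennreal[symmetric]\<close>)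
  also have "\<dots> = (\<Sum>\<^sub>\<infinity>x\<in>A. ennreal (m x))"
    by (rule nonneg_infsum_complete[symmetric]) auto
  finally show ?thesis by simp
qed

text \<open>The half of Tonelli's theorem needed here: a double sum over pairs is bounded by the
  iterated sum.  It links the pair sum in \<open>Qt\<close> to the vertexwise sums in \<open>intrinsic\<close>.\<close>

lemma enn_infsum_pairs_le_iterated:
  fixes g :: "'a \<Rightarrow> 'b \<Rightarrow> ennreal"
  shows "(\<Sum>\<^sub>\<infinity>(u,v)\<in>UNIV. g u v) \<le> (\<Sum>\<^sub>\<infinity>u\<in>UNIV. \<Sum>\<^sub>\<infinity>v\<in>UNIV. g u v)"
proof (rule enn_infsum_le)
  fix F :: "('a \<times> 'b) set" assume F: "finite F"
  have "sum (\<lambda>(u,v). g u v) F \<le> sum (\<lambda>(u,v). g u v) (fst ` F \<times> snd ` F)"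
    by (rule sum_mono2) (use F in \<open>auto simp: finite_cartesian_product intro: rev_image_eqI\<close>)
  also have "\<dots> = (\<Sum>u\<in>fst ` F. \<Sum>v\<in>snd ` F. g u v)"
    by (simp add: sum.cartesian_product)
  also have "\<dots> \<le> (\<Sum>u\<in>fst ` F. \<Sum>\<^sub>\<infinity>v\<in>UNIV. g u v)"
    by (intro sum_mono enn_sum_le_infsum) (use F in auto)
  also have "\<dots> \<le> (\<Sum>\<^sub>\<infinity>u\<in>UNIV. \<Sum>\<^sub>\<infinity>v\<in>UNIV. g u v)"
    by (intro enn_sum_le_infsum) (use F in auto)
  finally show "sum (\<lambda>(u,v). g u v) F \<le> (\<Sum>\<^sub>\<infinity>u\<in>UNIV. \<Sum>\<^sub>\<infinity>v\<in>UNIV. g u v)" .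
qed

lemma edge_energy_le_of_lipschitz:
  fixes b \<sigma> :: "'x \<Rightarrow> 'x \<Rightarrow> real" and m :: "'x \<Rightarrow> real" and f :: "'x \<Rightarrow> complex"
  assumes b0: "\<And>u v. b u v \<ge> 0" and m0: "\<And>u. m u \<ge> 0" and ms: "m summable_on UNIV"
    and it: "intrinsic b m \<sigma>" and lip: "\<And>u v. cmod (f u - f v) \<le> t * \<sigma> u v"
  shows "ennreal (1/2) * (\<Sum>\<^sub>\<infinity>(u,v)\<in>UNIV. ennreal (b u v * (cmod (f u - f v))\<^sup>2))
           \<le> ennreal (t\<^sup>2 * (\<Sum>\<^sub>\<infinity>z\<in>UNIV. m z))"
proof -
  let ?e = "\<lambda>u v. ennreal (b u v * (\<sigma> u v)\<^sup>2)"
  have edge: "ennreal (b u v * (cmod (f u - f v))\<^sup>2) \<le> ennreal (t\<^sup>2) * ?e u v" for u v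
  proof -
    have "(cmod (f u - f v))\<^sup>2 \<le> (t * \<sigma> u v)\<^sup>2"
      using lip[of u v] by (intro power_mono) auto
    then have "b u v * (cmod (f u - f v))\<^sup>2 \<le> t\<^sup>2 * (b u v * (\<sigma> u v)\<^sup>2)"
      using b0[of u v] by (simp add: power_mult_distrib mult_left_mono mult.left_commute)
    then show ?thesis by (simp add: ennreal_mult[symmetric] ennreal_leI b0)
  qed
  have "ennreal (1/2) * (\<Sum>\<^sub>\<infinity>(u,v)\<in>UNIV. ennreal (b u v * (cmod (f u - f v))\<^sup>2))
      \<le> ennreal (1/2) * (\<Sum>\<^sub>\<infinity>(u,v)\<in>UNIV. ennreal (t\<^sup>2) * ?e u v)"
    by (intro mult_left_mono enn_infsum_mono) (auto simp: edge)
  also have "\<dots> = ennreal (t\<^sup>2) * (ennreal (1/2) * (\<Sum>\<^sub>\<infinity>(u,v)\<in>UNIV. ?e u v))"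
    using enn_infsum_cmult[of "ennreal (t\<^sup>2)" "\<lambda>(u,v). ?e u v" UNIV]
    by (simp add: case_prod_beta' mult.left_commute)
  also have "\<dots> \<le> ennreal (t\<^sup>2) * (ennreal (1/2) * (\<Sum>\<^sub>\<infinity>u\<in>UNIV. \<Sum>\<^sub>\<infinity>v\<in>UNIV. ?e u v))"
    by (intro mult_left_mono enn_infsum_pairs_le_iterated) auto
  also have "\<dots> = ennreal (t\<^sup>2) * (\<Sum>\<^sub>\<infinity>u\<in>UNIV. ennreal (1/2) * (\<Sum>\<^sub>\<infinity>v\<in>UNIV. ?e u v))"
    by (simp add: enn_infsum_cmult)
  also have "\<dots> \<le> ennreal (t\<^sup>2) * (\<Sum>\<^sub>\<infinity>u\<in>UNIV. ennreal (m u))"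
    by (intro mult_left_mono enn_infsum_mono) (use it in \<open>auto simp: intrinsic_def\<close>)
  also have "\<dots> = ennreal (t\<^sup>2 * (\<Sum>\<^sub>\<infinity>z\<in>UNIV. m z))"
    using ms m0 by (simp add: enn_infsum_real ennreal_mult infsum_nonneg)
  finally show ?thesis .
qed

lemma killing_term_le_of_bounded:
  fixes c g :: "'x \<Rightarrow> real"
  assumes c0: "\<And>u. c u \<ge> 0" and cs: "c summable_on UNIV" and bound: "\<And>u. \<bar>g u\<bar> \<le> B"
  shows "(\<Sum>\<^sub>\<infinity>u\<in>UNIV. ennreal (c u * (g u)\<^sup>2)) \<le> ennreal ((\<Sum>\<^sub>\<infinity>z\<in>UNIV. c z) * B\<^sup>2)"
proof -
  have "(\<Sum>\<^sub>\<infinity>u\<in>UNIV. ennreal (c u * (g u)\<^sup>2)) \<le> (\<Sum>\<^sub>\<infinity>u\<in>UNIV. ennreal (c u * B\<^sup>2))"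
  proof (rule enn_infsum_mono)
    fix u :: 'x
    have "(g u)\<^sup>2 \<le> B\<^sup>2"
      using bound[of u] by (metis abs_ge_zero abs_le_square_iff abs_of_nonneg order.trans)
    then show "ennreal (c u * (g u)\<^sup>2) \<le> ennreal (c u * B\<^sup>2)"
      using c0[of u] by (intro ennreal_leI mult_left_mono)
  qed
  also have "\<dots> = ennreal (\<Sum>\<^sub>\<infinity>u\<in>UNIV. c u * B\<^sup>2)"
    by (rule enn_infsum_real) (use cs c0 in \<open>auto intro: summable_on_cmult_left\<close>)
  also have "(\<Sum>\<^sub>\<infinity>u\<in>UNIV. c u * B\<^sup>2) = (\<Sum>\<^sub>\<infinity>z\<in>UNIV. c z) * B\<^sup>2"
    by (rule infsum_cmult_left) (use cs in auto)
  finally show ?thesis .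
qed

lemma pseudometric_distance_lipschitz:
  assumes "pseudometric \<sigma>"
  shows "\<bar>\<sigma> x u - \<sigma> x v\<bar> \<le> \<sigma> u v"
  using assms unfolding pseudometric_def
  by (metis abs_le_iff add.commute diff_le_eq minus_diff_eq)

lemma energy_of_scaled_distance:
  fixes b \<sigma> :: "'x \<Rightarrow> 'x \<Rightarrow> real" and c m :: "'x \<Rightarrow> real"
  assumes wg: "weighted_graph b c" and mo: "measure_on m" and ms: "m summable_on UNIV"
    and ps: "pseudometric \<sigma>" and it: "intrinsic b m \<sigma>" and t: "t \<ge> 0" and R: "R \<ge> 0"
    and kill: "(\<Sum>\<^sub>\<infinity>u\<in>UNIV. ennreal (c u * (\<sigma> x u)\<^sup>2)) \<le> ennreal R"
  shows "Qt b c (\<lambda>z. complex_of_real (t * \<sigma> x z)) \<le> ennreal (t\<^sup>2 * ((\<Sum>\<^sub>\<infinity>z\<in>UNIV. m z) + R))"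
proof -
  let ?f = "\<lambda>z. complex_of_real (t * \<sigma> x z)"
  have b0: "\<And>u v. b u v \<ge> 0" and c0: "\<And>u. c u \<ge> 0"
    using wg unfolding weighted_graph_def by auto
  have m0: "\<And>u. m u \<ge> 0" using mo unfolding measure_on_def by auto
  have lip: "cmod (?f u - ?f v) \<le> t * \<sigma> u v" for u v
  proof -
    have "cmod (?f u - ?f v) = t * \<bar>\<sigma> x u - \<sigma> x v\<bar>"
      using t by (simp flip: of_real_diff right_diff_distrib add: abs_mult norm_mult)
    then show ?thesis
      using pseudometric_distance_lipschitz[OF ps] t by (simp add: mult_left_mono)
  qed
  have M0: "(\<Sum>\<^sub>\<infinity>z\<in>UNIV. m z) \<ge> 0" using m0 by (simp add: infsum_nonneg)
  have pointwise: "ennreal (c u * (cmod (?f u))\<^sup>2) = ennreal (t\<^sup>2) * ennreal (c u * (\<sigma> x u)\<^sup>2)" for u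
  proof -
    have real_eq: "c u * (cmod (?f u))\<^sup>2 = t\<^sup>2 * (c u * (\<sigma> x u)\<^sup>2)"
      by (simp only: norm_of_real power2_abs power_mult_distrib mult.left_commute)
    show ?thesis unfolding real_eq by (rule ennreal_mult) (use c0 in auto)
  qed
  have killing: "(\<Sum>\<^sub>\<infinity>u\<in>UNIV. ennreal (c u * (cmod (?f u))\<^sup>2)) \<le> ennreal (t\<^sup>2 * R)"
    unfolding pointwise enn_infsum_cmult ennreal_mult[OF zero_le_power2 R]
    by (rule mult_left_mono[OF kill]) simp
  have "Qt b c ?f \<le> ennreal (t\<^sup>2 * (\<Sum>\<^sub>\<infinity>z\<in>UNIV. m z)) + ennreal (t\<^sup>2 * R)"
    unfolding Qt_def
    by (intro add_mono killing edge_energy_le_of_lipschitz[OF b0 m0 ms it lip])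
  also have "\<dots> = ennreal (t\<^sup>2 * (\<Sum>\<^sub>\<infinity>z\<in>UNIV. m z) + t\<^sup>2 * R)"
    using M0 R by (intro ennreal_plus[symmetric]) auto
  finally show ?thesis by (simp only: distrib_left)
qed

lemma rho_ge_of_energy_le_1:
  assumes "Qt b c f \<le> 1"
  shows "ennreal (cmod (f x - f y)) \<le> rho b c x y"
proof -
  have "f \<in> Dt b c"
    using assms ennreal_one_less_top unfolding Dt_def by (auto intro: le_less_trans)
  with assms show ?thesis unfolding rho_def by (intro SUP_upper) auto
qed

text \<open>The abstract comparison step: if the scaled distance functions \<open>t \<sigma>(x,\<cdot>)\<close> have energy
  at most \<open>t\<^sup>2 K\<close>, then \<open>\<sigma>(x,y) \<le> \<surd>K \<rho>(x,y)\<close>; for \<open>K = 0\<close> this forces \<open>\<rho>(x,y) = \<infinity>\<close>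
  unless \<open>\<sigma>(x,y) = 0\<close>.\<close>

lemma distance_le_sqrt_rho:
  fixes \<sigma> :: "'x \<Rightarrow> 'x \<Rightarrow> real" and K :: real
  assumes K0: "K \<ge> 0" and s0: "\<sigma> x y \<ge> 0" and sxx: "\<sigma> x x = 0"
    and energy: "\<And>t. t \<ge> 0 \<Longrightarrow> Qt b c (\<lambda>z. complex_of_real (t * \<sigma> x z)) \<le> ennreal (t\<^sup>2 * K)"
  shows "rho b c x y = \<infinity> \<or> ennreal (\<sigma> x y) \<le> ennreal (sqrt K) * rho b c x y"
proof -
  have scaled: "ennreal (t * \<sigma> x y) \<le> rho b c x y" if t: "t \<ge> 0" and tK: "t\<^sup>2 * K \<le> 1" for t
  proof -
    let ?f = "\<lambda>z. complex_of_real (t * \<sigma> x z)"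
    have "Qt b c ?f \<le> 1"
      using energy[OF t] tK by (metis ennreal_1 ennreal_leI order.trans)
    then have "ennreal (cmod (?f x - ?f y)) \<le> rho b c x y" by (rule rho_ge_of_energy_le_1)
    moreover have "cmod (?f x - ?f y) = t * \<sigma> x y"
      using sxx s0 t by (simp del: of_real_mult add: norm_minus_commute)
    ultimately show ?thesis by simp
  qed
  consider "\<sigma> x y = 0" | "\<sigma> x y > 0" "K = 0" | "\<sigma> x y > 0" "K > 0"
    using s0 K0 by linarith
  then show ?thesis
  proof cases
    case 1
    then show ?thesis by simp
  next
    case 2
    have "rho b c x y = \<infinity>"
    proof (rule ccontr)
      assume "rho b c x y \<noteq> \<infinity>"
      then obtain r where r: "rho b c x y = ennreal r" "r \<ge> 0"
        by (cases "rho b c x y") auto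
      have "ennreal (((r + 1) / \<sigma> x y) * \<sigma> x y) \<le> rho b c x y"
        by (rule scaled) (use 2 r in auto)
      then have "ennreal (r + 1) \<le> ennreal r" using 2 r by simp
      then show False using r by (simp add: ennreal_le_iff)
    qed
    then show ?thesis by simp
  next
    case 3
    have "ennreal ((1 / sqrt K) * \<sigma> x y) \<le> rho b c x y"
      by (rule scaled) (use 3 in \<open>auto simp: power_divide\<close>)
    then have "ennreal (sqrt K) * ennreal ((1 / sqrt K) * \<sigma> x y) \<le> ennreal (sqrt K) * rho b c x y"
      by (rule mult_left_mono) auto
    moreover have "ennreal (sqrt K) * ennreal ((1 / sqrt K) * \<sigma> x y) = ennreal (\<sigma> x y)"
      using 3 by (simp add: ennreal_mult[symmetric])
    ultimately show ?thesis by simp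
  qed
qed

theorem mainTheorem3:
  fixes b :: "'x \<Rightarrow> 'x \<Rightarrow> real" and c :: "'x \<Rightarrow> real"
    and m :: "'x \<Rightarrow> real" and \<sigma> :: "'x \<Rightarrow> 'x \<Rightarrow> real"
  assumes "countable (UNIV :: 'x set)" and "infinite (UNIV :: 'x set)"
    and "weighted_graph b c"
    and "measure_on m" and "m summable_on UNIV"
    and "pseudometric \<sigma>" and "intrinsic b m \<sigma>"
  shows "((\<forall>x. c x = 0) \<longrightarrow>
            (\<forall>x y. rho b c x y = \<infinity> \<or>
                   ennreal (\<sigma> x y) \<le> ennreal (sqrt (\<Sum>\<^sub>\<infinity>z\<in>UNIV. m z)) * rho b c x y))
       \<and> (\<forall>S::real. c summable_on UNIV \<longrightarrow> S \<ge> 0 \<longrightarrow> (\<forall>x y. \<sigma> x y \<le> S) \<longrightarrow>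
            (\<forall>x y. rho b c x y = \<infinity> \<or>
                   ennreal (\<sigma> x y) \<le>
                     ennreal (sqrt ((\<Sum>\<^sub>\<infinity>z\<in>UNIV. m z) + (\<Sum>\<^sub>\<infinity>z\<in>UNIV. c z) * S\<^sup>2)) * rho b c x y))"
proof -
  note energy = energy_of_scaled_distance[OF assms(3-7)]
  have c0: "\<And>u. c u \<ge> 0" using assms(3) unfolding weighted_graph_def by auto
  have m0: "\<And>u. m u \<ge> 0" using assms(4) unfolding measure_on_def by auto
  have M0: "(\<Sum>\<^sub>\<infinity>z\<in>UNIV. m z) \<ge> 0" by (rule infsum_nonneg) (use m0 in auto)
  have s0: "\<And>u v. \<sigma> u v \<ge> 0" and sxx: "\<And>u. \<sigma> u u = 0"
    using assms(6) unfolding pseudometric_def by auto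
  show ?thesis
  proof (intro conjI allI impI)
    fix x y assume "\<forall>x. c x = 0"
    then have "Qt b c (\<lambda>z. complex_of_real (t * \<sigma> x z)) \<le> ennreal (t\<^sup>2 * (\<Sum>\<^sub>\<infinity>z\<in>UNIV. m z))"
      if "t \<ge> 0" for t using energy[OF that, of 0 x] by simp
    then show "rho b c x y = \<infinity> \<or> ennreal (\<sigma> x y) \<le> ennreal (sqrt (\<Sum>\<^sub>\<infinity>z\<in>UNIV. m z)) * rho b c x y"
      by (rule distance_le_sqrt_rho[where \<sigma>=\<sigma> and x=x and y=y, OF M0 s0 sxx])
  next
    fix S :: real and x y
    assume cs: "c summable_on UNIV" and "S \<ge> 0" and "\<forall>x y. \<sigma> x y \<le> S"
    then have "(\<Sum>\<^sub>\<infinity>u\<in>UNIV. ennreal (c u * (\<sigma> x u)\<^sup>2)) \<le> ennreal ((\<Sum>\<^sub>\<infinity>z\<in>UNIV. c z) * S\<^sup>2)"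
      using s0 by (intro killing_term_le_of_bounded[OF c0 cs]) auto
    moreover have "(\<Sum>\<^sub>\<infinity>z\<in>UNIV. c z) * S\<^sup>2 \<ge> 0" using c0 by (simp add: infsum_nonneg)
    ultimately show "rho b c x y = \<infinity> \<or> ennreal (\<sigma> x y) \<le>
        ennreal (sqrt ((\<Sum>\<^sub>\<infinity>z\<in>UNIV. m z) + (\<Sum>\<^sub>\<infinity>z\<in>UNIV. c z) * S\<^sup>2)) * rho b c x y"
      using M0 by (intro distance_le_sqrt_rho[where \<sigma>=\<sigma> and x=x and y=y, OF _ s0 sxx] energy) auto
  qed
qed

end
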